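(* Let $V\subset\mathbb{R}^n$ be starlike with respect to the origin, let $a\in V$, let $k\in\mathbb{N}$, let $P_k$ be a homogeneous polynomial of degree $k$ on $\mathbb{R}^n$, and let $L\ge0$. If $|P_k(v)|\le L$ for all $v\in a+V$, then $|P_k(v)|\le L$ for all $v\in\frac{1}{2e}V$.
   Context: $V$ starlike with respect to the origin means $sv\in V$ for all $v\in V$ and $s\in[0,1]$. $a+V=\{a+v: v\in V\}$ and $\lambda V=\{\lambda v: v\in V\}$. *)

theory Defs
  imports "HOL-Analysis.Analysis"
begin

definition starlike_origin :: "'a::real_vector set \<Rightarrow> bool" where
  "starlike_origin V \<longleftrightarrow> (\<forall>v\<in>V. \<forall>s::real. 0 \<le> s \<and> s \<le> 1 \<longrightarrow> s *\<^sub>R v \<in> V)"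

definition homogeneous_poly :: "nat \<Rightarrow> (real^'n \<Rightarrow> real) \<Rightarrow> bool" where
  "homogeneous_poly k P \<longleftrightarrow>
     (\<exists>c :: ('n \<Rightarrow> nat) \<Rightarrow> real.
        \<forall>x. P x = (\<Sum>\<alpha>\<in>{\<alpha>. (\<Sum>i\<in>UNIV. \<alpha> i) = k}. c \<alpha> * (\<Prod>i\<in>UNIV. (x $ i) ^ \<alpha> i)))"

end

(* Fix v in V.  Since V is starlike, a + t v lies in a + V for t in [0,1],
   so the one-variable polynomial Q(t) = P(a + t v) is bounded by L on [0,1].
   Q has degree at most k and its k-th coefficient is P(v) (homogeneity).
   The k-th finite difference of Q with step 1/k equals k! k^(-k) P(v) and is a
   combination of values of Q on [0,1] with total weight 2^k; together with
   k^k <= e^k k! this gives |P(v)| <= (2e)^k L.  Homogeneity finally yields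
   P(v/(2e)) = P(v)/(2e)^k. *)

theory Submission
  imports Defs "HOL-Computational_Algebra.Polynomial"
begin

lemma alternating_binomial_sum:
  assumes "n > 0"
  shows "(\<Sum>j\<le>n. (-1) ^ (n - j) * of_nat (n choose j)) = (0 :: 'a::comm_ring_1)"
proof -
  have "(\<Sum>j\<le>n. (-1) ^ (n - j) * of_nat (n choose j))
      = (\<Sum>j\<le>n. (-1) ^ n * ((-1) ^ j * (of_nat (n choose j) :: 'a)))"
    by (intro sum.cong refl)
       (simp add: neg_one_power_add_eq_neg_one_power_diff[symmetric] power_add mult.assoc)
  also have "\<dots> = 0"
    by (simp add: sum_distrib_left[symmetric] choose_alternating_sum[OF assms])
  finally show ?thesis .
qed

text \<open>Reduction of the alternating power sums of row k+1 to those of row k,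
  via the absorption identity (k+1 choose i+1)(i+1) = (k+1)(k choose i) and the
  binomial expansion of (i+1)^m.\<close>
lemma alternating_binomial_power_sum_Suc:
  "(\<Sum>j\<le>Suc k. (-1) ^ (Suc k - j) * of_nat (Suc k choose j) * of_nat j ^ Suc m)
   = of_nat (Suc k) * (\<Sum>l\<le>m. of_nat (m choose l) *
       (\<Sum>i\<le>k. (-1) ^ (k - i) * of_nat (k choose i) * of_nat i ^ l) :: 'a::comm_ring_1)"
proof -
  have absorb: "of_nat (Suc k choose Suc i) * of_nat (Suc i) = (of_nat (Suc k) * of_nat (k choose i) :: 'a)" for i
    using Suc_times_binomial_eq[of k i] by (metis of_nat_mult mult.commute)
  have "(\<Sum>j\<le>Suc k. (-1) ^ (Suc k - j) * of_nat (Suc k choose j) * of_nat j ^ Suc m)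
      = (\<Sum>i\<le>k. (-1) ^ (k - i) * (of_nat (Suc k choose Suc i) * of_nat (Suc i)) * (of_nat (Suc i) ^ m :: 'a))"
    by (simp add: sum.atMost_Suc_shift mult_ac del: binomial_Suc_Suc sum.atMost_Suc of_nat_Suc)
  also have "\<dots> = (\<Sum>i\<le>k. of_nat (Suc k) * ((-1) ^ (k - i) * of_nat (k choose i) *
                   (\<Sum>l\<le>m. of_nat (m choose l) * of_nat i ^ l)))"
  proof (rule sum.cong[OF refl])
    fix i
    have "(of_nat (Suc i) ^ m :: 'a) = (\<Sum>l\<le>m. of_nat (m choose l) * of_nat i ^ l)"
      using binomial_ring[of "of_nat i :: 'a" 1 m] by (simp add: add.commute)
    then show "(-1) ^ (k - i) * (of_nat (Suc k choose Suc i) * of_nat (Suc i)) * of_nat (Suc i) ^ m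
        = of_nat (Suc k) * ((-1) ^ (k - i) * of_nat (k choose i) *
                   (\<Sum>l\<le>m. of_nat (m choose l) * (of_nat i ^ l :: 'a)))"
      by (subst absorb) (simp only: mult_ac)
  qed
  also have "\<dots> = of_nat (Suc k) * (\<Sum>l\<le>m. of_nat (m choose l) *
       (\<Sum>i\<le>k. (-1) ^ (k - i) * of_nat (k choose i) * of_nat i ^ l))"
    by (simp add: sum_distrib_left sum.swap[of _ "{..k}"] mult_ac)
  finally show ?thesis .
qed

lemma alternating_binomial_power_sum:
  assumes "m \<le> k"
  shows "(\<Sum>j\<le>k. (-1) ^ (k - j) * of_nat (k choose j) * of_nat j ^ m)
         = (if m = k then of_nat (fact k) else (0 :: 'a::comm_ring_1))"
  using assms
proof (induction k arbitrary: m)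
  case 0
  then show ?case by simp
next
  case (Suc k)
  show ?case
  proof (cases m)
    case 0
    then show ?thesis using alternating_binomial_sum[of "Suc k", where 'a='a] by simp
  next
    case (Suc m')
    with Suc.prems have "m' \<le> k" by simp
    have "(\<Sum>j\<le>Suc k. (-1) ^ (Suc k - j) * of_nat (Suc k choose j) * of_nat j ^ m)
        = of_nat (Suc k) * (\<Sum>l\<le>m'. of_nat (m' choose l) *
            (\<Sum>i\<le>k. (-1) ^ (k - i) * of_nat (k choose i) * (of_nat i ^ l :: 'a)))"
      unfolding Suc by (rule alternating_binomial_power_sum_Suc)
    also have "\<dots> = of_nat (Suc k) * (\<Sum>l\<le>m'. of_nat (m' choose l) *
                        (if l = k then of_nat (fact k) else 0))"
      using Suc.IH \<open>m' \<le> k\<close> by (intro arg_cong[where f="\<lambda>x. _ * x"] sum.cong) auto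
    also have "\<dots> = (if m = Suc k then of_nat (fact (Suc k)) else 0)"
      using \<open>m' \<le> k\<close> Suc by (auto simp: if_distrib sum.delta' of_nat_mult algebra_simps cong: if_cong)
    finally show ?thesis .
  qed
qed

lemma finite_difference_poly:
  fixes q :: "'a::comm_ring_1 poly"
  assumes "degree q \<le> k"
  shows "(\<Sum>j\<le>k. (-1) ^ (k - j) * of_nat (k choose j) * poly q (of_nat j * h))
         = of_nat (fact k) * h ^ k * coeff q k"
proof -
  have poly_q: "poly q x = (\<Sum>m\<le>k. coeff q m * x ^ m)" for x
    unfolding poly_altdef
    by (rule sum.mono_neutral_left) (use assms in \<open>auto simp: coeff_eq_0\<close>)
  have "(\<Sum>j\<le>k. (-1) ^ (k - j) * of_nat (k choose j) * poly q (of_nat j * h))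
      = (\<Sum>m\<le>k. coeff q m * h ^ m *
           (\<Sum>j\<le>k. (-1) ^ (k - j) * of_nat (k choose j) * of_nat j ^ m))"
    unfolding poly_q sum_distrib_left
    by (subst sum.swap) (simp add: power_mult_distrib mult_ac)
  also have "\<dots> = (\<Sum>m\<le>k. if m = k then of_nat (fact k) * h ^ k * coeff q k else 0)"
  proof (rule sum.cong[OF refl])
    fix m
    assume "m \<in> {..k}"
    then have power_sum: "(\<Sum>j\<le>k. (-1) ^ (k - j) * of_nat (k choose j) * of_nat j ^ m)
        = (if m = k then of_nat (fact k) else (0 :: 'a))"
      by (intro alternating_binomial_power_sum) simp
    show "coeff q m * h ^ m *
          (\<Sum>j\<le>k. (-1) ^ (k - j) * of_nat (k choose j) * of_nat j ^ m)
        = (if m = k then of_nat (fact k) * h ^ k * coeff q k else 0)"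
      unfolding power_sum by (simp add: mult_ac)
  qed
  also have "\<dots> = of_nat (fact k) * h ^ k * coeff q k"
    by simp
  finally show ?thesis .
qed

text \<open>Consequently, a polynomial of degree at most k bounded by L at the nodes
  0, h, ..., k h has k-th coefficient at most 2^k L / (k! h^k), since the
  binomial weights sum to 2^k.\<close>
lemma finite_difference_bound:
  fixes q :: "real poly"
  assumes "degree q \<le> k"
    and nodes: "\<And>j. j \<le> k \<Longrightarrow> \<bar>poly q (real j * h)\<bar> \<le> L"
  shows "fact k * \<bar>h\<bar> ^ k * \<bar>coeff q k\<bar> \<le> 2 ^ k * L"
proof -
  have "fact k * \<bar>h\<bar> ^ k * \<bar>coeff q k\<bar>
      = \<bar>\<Sum>j\<le>k. (-1) ^ (k - j) * real (k choose j) * poly q (real j * h)\<bar>"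
    using finite_difference_poly[OF assms(1), of h] by (simp add: abs_mult power_abs)
  also have "\<dots> \<le> (\<Sum>j\<le>k. \<bar>(-1) ^ (k - j) * real (k choose j) * poly q (real j * h)\<bar>)"
    by (rule sum_abs)
  also have "\<dots> \<le> (\<Sum>j\<le>k. real (k choose j) * L)"
    by (intro sum_mono) (simp add: abs_mult nodes mult_left_mono)
  also have "\<dots> = 2 ^ k * L"
    by (simp add: sum_distrib_right[symmetric] of_nat_sum[symmetric] choose_row_sum)
  finally show ?thesis .
qed

lemma power_div_fact_le_exp:
  fixes x :: real
  assumes "0 \<le> x"
  shows "x ^ n / fact n \<le> exp x"
proof -
  have exp_sums: "(\<lambda>m. x ^ m / fact m) sums exp x"
    using exp_converges[of x] by (simp add: divide_inverse_commute)
  have "(\<Sum>m\<in>{n}. x ^ m / fact m) \<le> (\<Sum>m. x ^ m / fact m)"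
    by (rule sum_le_suminf) (use exp_sums assms in \<open>auto simp: sums_summable\<close>)
  then show ?thesis
    using sums_unique[OF exp_sums] by simp
qed

lemma power_self_le_exp_fact: "real k ^ k \<le> exp 1 ^ k * fact k"
  using power_div_fact_le_exp[of "real k" k]
  by (simp add: divide_simps exp_of_nat_mult[symmetric])

lemma coeff_bound_unit_interval:
  fixes Q :: "real poly"
  assumes "degree Q \<le> k"
    and bounded: "\<And>t. 0 \<le> t \<Longrightarrow> t \<le> 1 \<Longrightarrow> \<bar>poly Q t\<bar> \<le> L"
  shows "\<bar>coeff Q k\<bar> \<le> (2 * exp 1) ^ k * L"
proof -
  have "0 \<le> L"
    using bounded[of 0] by simp
  have "\<bar>poly Q (real j * (1 / real k))\<bar> \<le> L" if "j \<le> k" for j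
    using that by (intro bounded) (auto simp: divide_le_eq_1)
  then have "fact k * (1 / real k) ^ k * \<bar>coeff Q k\<bar> \<le> 2 ^ k * L"
    using finite_difference_bound[OF assms(1), of "1 / real k" L] by simp
  then have "fact k * \<bar>coeff Q k\<bar> \<le> 2 ^ k * L * real k ^ k"
    by (cases "k = 0") (simp_all add: field_simps)
  also have "\<dots> \<le> 2 ^ k * L * (exp 1 ^ k * fact k)"
    using \<open>0 \<le> L\<close> power_self_le_exp_fact by (intro mult_left_mono) auto
  finally show ?thesis
    by (simp add: power_mult_distrib mult_ac)
qed

lemma coeff_mult_at_degree_bounds:
  fixes p q :: "'a::comm_semiring_1 poly"
  assumes "degree p \<le> m" "degree q \<le> n"
  shows "coeff (p * q) (m + n) = coeff p m * coeff q n"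
proof -
  have "coeff (p * q) (m + n) = (\<Sum>i\<le>m + n. coeff p i * coeff q (m + n - i))"
    by (rule coeff_mult)
  also have "\<dots> = (\<Sum>i\<le>m + n. if i = m then coeff p m * coeff q n else 0)"
  proof (rule sum.cong[OF refl])
    fix i
    have "coeff p i = 0 \<or> coeff q (m + n - i) = 0" if "i \<noteq> m"
      using that assms by (cases "i < m") (auto simp: coeff_eq_0)
    then show "coeff p i * coeff q (m + n - i) = (if i = m then coeff p m * coeff q n else 0)"
      by auto
  qed
  also have "\<dots> = coeff p m * coeff q n"
    by simp
  finally show ?thesis .
qed

lemma coeff_prod_at_degree_bounds:
  fixes f :: "'b \<Rightarrow> 'a::comm_semiring_1 poly"
  assumes "finite I" "\<And>i. i \<in> I \<Longrightarrow> degree (f i) \<le> d i"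
  shows "coeff (prod f I) (sum d I) = (\<Prod>i\<in>I. coeff (f i) (d i))"
  using assms
proof (induction I rule: finite_induct)
  case empty
  then show ?case by simp
next
  case (insert x F)
  have "degree (prod f F) \<le> sum (degree \<circ> f) F"
    by (rule degree_prod_sum_le[OF insert(1)])
  also have "\<dots> \<le> sum d F"
    using insert by (auto intro: sum_mono)
  finally have "coeff (f x * prod f F) (d x + sum d F) = coeff (f x) (d x) * coeff (prod f F) (sum d F)"
    using insert by (intro coeff_mult_at_degree_bounds) auto
  then show ?case
    using insert by simp
qed

lemma degree_power_linear: "degree ([:c, b:] ^ n) \<le> n"
proof -
  have "degree ([:c, b:] ^ n) \<le> degree [:c, b:] * n"
    by (rule degree_power_le)
  also have "\<dots> \<le> 1 * n"
    by (intro mult_le_mono1 order.trans[OF degree_pCons_le]) simp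
  finally show ?thesis
    by simp
qed

lemma coeff_power_linear: "coeff ([:c, b:] ^ n) n = b ^ n"
proof (induction n)
  case 0
  then show ?case by simp
next
  case (Suc n)
  have "coeff ([:c, b:] * [:c, b:] ^ n) (1 + n) = b * coeff ([:c, b:] ^ n) n"
    using degree_power_linear[of c b n]
    by (subst coeff_mult_at_degree_bounds) auto
  then show ?case
    using Suc by simp
qed

definition monomial :: "('n \<Rightarrow> nat) \<Rightarrow> real^'n \<Rightarrow> real" where
  "monomial \<alpha> x = (\<Prod>i\<in>UNIV. (x $ i) ^ \<alpha> i)"

lemma monomial_on_line:
  fixes a v :: "real^'n" and \<alpha> :: "'n \<Rightarrow> nat"
  defines "M \<equiv> \<Prod>i\<in>UNIV. [:a $ i, v $ i:] ^ \<alpha> i"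
  shows "poly M t = monomial \<alpha> (a + t *\<^sub>R v)"
    and "degree M \<le> sum \<alpha> UNIV"
    and "coeff M (sum \<alpha> UNIV) = monomial \<alpha> v"
proof -
  show "poly M t = monomial \<alpha> (a + t *\<^sub>R v)"
    by (simp add: M_def monomial_def poly_prod algebra_simps)
  have "degree M \<le> sum (degree \<circ> (\<lambda>i. [:a $ i, v $ i:] ^ \<alpha> i)) UNIV"
    unfolding M_def by (rule degree_prod_sum_le) simp
  also have "\<dots> \<le> sum \<alpha> UNIV"
    by (intro sum_mono) (simp add: degree_power_linear)
  finally show "degree M \<le> sum \<alpha> UNIV" .
  show "coeff M (sum \<alpha> UNIV) = monomial \<alpha> v"
    unfolding M_def monomial_def
    by (subst coeff_prod_at_degree_bounds) (simp_all add: degree_power_linear coeff_power_linear)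
qed

lemma homogeneous_polyE:
  assumes "homogeneous_poly k P"
  obtains c where "\<And>x. P x = (\<Sum>\<alpha>\<in>{\<alpha>. sum \<alpha> UNIV = k}. c \<alpha> * monomial \<alpha> x)"
  using assms unfolding homogeneous_poly_def monomial_def by blast

lemma homogeneous_poly_scale:
  assumes "homogeneous_poly k P"
  shows "P (s *\<^sub>R x) = s ^ k * P x"
proof -
  obtain c where P: "\<And>x. P x = (\<Sum>\<alpha>\<in>{\<alpha>. sum \<alpha> UNIV = k}. c \<alpha> * monomial \<alpha> x)"
    using homogeneous_polyE[OF assms] by blast
  have "monomial \<alpha> (s *\<^sub>R x) = s ^ sum \<alpha> UNIV * monomial \<alpha> x" for \<alpha>
    by (simp add: monomial_def power_mult_distrib prod.distrib power_sum)
  then show ?thesis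
    by (simp add: P sum_distrib_left mult_ac)
qed

lemma homogeneous_poly_on_line:
  fixes a v :: "real^'n"
  assumes "homogeneous_poly k P"
  obtains Q :: "real poly"
  where "degree Q \<le> k" "coeff Q k = P v" "\<And>t. poly Q t = P (a + t *\<^sub>R v)"
proof -
  obtain c where P: "\<And>x. P x = (\<Sum>\<alpha>\<in>{\<alpha>. sum \<alpha> UNIV = k}. c \<alpha> * monomial \<alpha> x)"
    using homogeneous_polyE[OF assms] by blast
  define M where "M \<alpha> = (\<Prod>i\<in>UNIV. [:a $ i, v $ i:] ^ \<alpha> i)" for \<alpha> :: "'n \<Rightarrow> nat"
  define Q where "Q = (\<Sum>\<alpha>\<in>{\<alpha>. sum \<alpha> UNIV = k}. smult (c \<alpha>) (M \<alpha>))"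
  note M = monomial_on_line[of a v, folded M_def]
  have "degree Q \<le> k"
  proof (cases "finite {\<alpha> :: 'n \<Rightarrow> nat. sum \<alpha> UNIV = k}")
    case True
    show ?thesis
      unfolding Q_def
      by (rule degree_sum_le[OF True]) (use M(2) in \<open>auto intro: order.trans[OF degree_smult_le]\<close>)
  qed (simp add: Q_def)
  moreover have "coeff Q k = P v"
    unfolding Q_def coeff_sum P using M(3) by (intro sum.cong) auto
  moreover have "poly Q t = P (a + t *\<^sub>R v)" for t
    by (simp add: Q_def poly_sum M(1) P)
  ultimately show ?thesis
    using that by blast
qed

text \<open>The main result.\<close>
theorem lemma3p5:
  fixes V :: "(real^'n) set" and a :: "real^'n" and k :: nat
    and P :: "real^'n \<Rightarrow> real" and L :: real
  assumes "starlike_origin V"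
    and "a \<in> V"
    and "homogeneous_poly k P"
    and "L \<ge> 0"
    and "\<forall>v \<in> (\<lambda>w. a + w) ` V. \<bar>P v\<bar> \<le> L"
  shows "\<forall>v \<in> (\<lambda>w. (1 / (2 * exp 1)) *\<^sub>R w) ` V. \<bar>P v\<bar> \<le> L"
proof
  fix u
  assume "u \<in> (\<lambda>w. (1 / (2 * exp 1)) *\<^sub>R w) ` V"
  then obtain v where "v \<in> V" and u: "u = (1 / (2 * exp 1)) *\<^sub>R v"
    by blast
  obtain Q where Q: "degree Q \<le> k" "coeff Q k = P v" "\<And>t. poly Q t = P (a + t *\<^sub>R v)"
    using homogeneous_poly_on_line[OF assms(3)] by blast
  have "\<bar>poly Q t\<bar> \<le> L" if "0 \<le> t" "t \<le> 1" for t
  proof -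
    have "t *\<^sub>R v \<in> V"
      using assms(1) \<open>v \<in> V\<close> that unfolding starlike_origin_def by blast
    then show ?thesis
      using assms(5) Q(3) by auto
  qed
  then have "\<bar>P v\<bar> \<le> (2 * exp 1) ^ k * L"
    using coeff_bound_unit_interval[OF Q(1)] Q(2) by simp
  moreover have "P u = P v / (2 * exp 1) ^ k"
    using homogeneous_poly_scale[OF assms(3)] by (simp add: u power_divide)
  ultimately show "\<bar>P u\<bar> \<le> L"
    by (simp add: abs_div pos_divide_le_eq mult.commute)
qed

end
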